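(* Let $q>1$, $p=\frac{q}{q-1}$, and assume Hypothesis (H$_q$). Then for all $x\in[a,b]$ and $\lambda\in[0,1]$, $$\Big|(1-\lambda)f(mx)+\lambda\frac{(x-a)f(ma)+(b-x)f(mb)}{b-a}-\frac{1}{m(b-a)}\int_{ma}^{mb}f(t)\,dt\Big|\le\frac{mA_4(1,\lambda,p)^{\frac1p}}{b-a}\Big\{(x-a)^2\Big(\frac{|f'(mx)|^q+\alpha m|f'(a)|^q}{\alpha+1}\Big)^{\frac1q}+(b-x)^2\Big(\frac{|f'(mx)|^q+\alpha m|f'(b)|^q}{\alpha+1}\Big)^{\frac1q}\Big\}.$$
   Context: $(\alpha,m)$-convexity: for $(\alpha,m)\in[0,1]\times(0,1]$ and an interval $K\subseteq[0,\infty)$, a function $g:K\to\mathbb{R}$ is $(\alpha,m)$-convex on $K$ if $g(tX+m(1-t)Y)\le t^\alpha g(X)+m(1-t^\alpha)g(Y)$ for all $X,Y\in K$ and $t\in[0,1]$ with $tX+m(1-t)Y\in K$ (convention $0^0=1$). Hypothesis (H$_q$): $I\subseteq[0,\infty)$ is an interval, $f:I\to\mathbb{R}$ is differentiable on the interior $I^\circ$, $m\in(0,1]$, $\alpha\in[0,1]$, $a<b$ with $ma,b\in I^\circ$, $f'$ is Lebesgue integrable on $[ma,mb]$, and $|f'|^q$ is $(\alpha,m)$-convex on $[ma,b]$. $\beta(u,v)=\int_0^1t^{u-1}(1-t)^{v-1}dt$ ($u,v>0$) is the Beta function and ${}_2F_1(a',b';c';z)=\frac{1}{\beta(b',c'-b')}\int_0^1t^{b'-1}(1-t)^{c'-b'-1}(1-zt)^{-a'}dt$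 ($c'>b'>0$, $|z|<1$) the hypergeometric function. For $\theta>0$, $p>1$: $A_4(\theta,\lambda,p)=\frac{1}{\theta p+1}$ if $\lambda=0$; $A_4(\theta,\lambda,p)=\frac{\lambda^{\frac{\theta p+1}{\theta}}}{\theta}\Big\{\beta\big(\tfrac1\theta,p+1\big)+\frac{(1-\lambda)^{p+1}}{p+1}\,{}_2F_1\big(\tfrac1\theta+p+1,\,p+1;\,p+2;\,1-\lambda\big)\Big\}$ if $0<\lambda<1$; $A_4(\theta,1,p)=\frac1\theta\beta\big(p+1,\tfrac1\theta\big)$. *)

theory Defs
  imports "HOL-Analysis.Analysis"
begin

definition pow0 :: "real \<Rightarrow> real \<Rightarrow> real" where
  "pow0 t e = (if t = 0 then (if e = 0 then 1 else 0) else t powr e)"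

definition alpha_m_convex_on :: "real \<Rightarrow> real \<Rightarrow> real set \<Rightarrow> (real \<Rightarrow> real) \<Rightarrow> bool" where
  "alpha_m_convex_on \<alpha> m K g \<longleftrightarrow>
     (\<forall>X\<in>K. \<forall>Y\<in>K. \<forall>t\<in>{0..1}. t * X + m * (1 - t) * Y \<in> K \<longrightarrow>
        g (t * X + m * (1 - t) * Y) \<le> pow0 t \<alpha> * g X + m * (1 - pow0 t \<alpha>) * g Y)"

text \<open>Gauss hypergeometric function via Euler's integral representation (c > b > 0, |z| < 1).\<close>
definition hyp2F1 :: "real \<Rightarrow> real \<Rightarrow> real \<Rightarrow> real \<Rightarrow> real" where
  "hyp2F1 a' b' c' z = (1 / Beta b' (c' - b')) *
     integral {0..1} (\<lambda>t. t powr (b' - 1) * (1 - t) powr (c' - b' - 1) * (1 - z * t) powr (- a'))"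

definition A4 :: "real \<Rightarrow> real \<Rightarrow> real \<Rightarrow> real" where
  "A4 \<theta> lam p =
    (if lam = 0 then 1 / (\<theta> * p + 1)
     else if lam < 1 then
       (lam powr ((\<theta> * p + 1) / \<theta>) / \<theta>) *
         (Beta (1 / \<theta>) (p + 1) +
          (1 - lam) powr (p + 1) / (p + 1) * hyp2F1 (1 / \<theta> + p + 1) (p + 1) (p + 2) (1 - lam))
     else (1 / \<theta>) * Beta (p + 1) (1 / \<theta>))"

end

theory Submission
  imports Defs
begin

text \<open>Write \<open>\<phi>\<^sub>y(t) = t (m x) + m (1 - t) y\<close>. Integrating \<open>(t - \<lambda>) f'(\<phi>\<^sub>y(t))\<close> over
  \<open>[0, 1]\<close> by parts expresses the left-hand side, multiplied by \<open>b - a\<close>, as the difference of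
  the values at \<open>y = a\<close> and \<open>y = b\<close> of \<open>m (x - y)\<^sup>2 \<integral>\<^sub>0\<^sup>1 (t - \<lambda>) f'(\<phi>\<^sub>y(t)) dt\<close>. Hoelder's
  inequality bounds each integral by \<open>(\<integral>|t - \<lambda>|\<^sup>p)\<^bsup>1/p\<^esup> (\<integral>|f'(\<phi>\<^sub>y)|\<^sup>q)\<^bsup>1/q\<^esup>\<close>; the first factor
  is \<open>A\<^sub>4(1, \<lambda>, p)\<close>, and \<open>(\<alpha>, m)\<close>-convexity of \<open>|f'|\<^sup>q\<close> integrates to the second bound, since
  \<open>\<integral>\<^sub>0\<^sup>1 t\<^sup>\<alpha> dt = 1/(\<alpha> + 1)\<close>.\<close>

lemma has_integral_powr_diff_left:
  fixes a b r :: real assumes "a \<le> b" "r \<ge> 0"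
  shows "((\<lambda>t. (t - a) powr r) has_integral ((b - a) powr (r + 1) / (r + 1))) {a..b}"
proof -
  have "((\<lambda>t. (t - a) powr r) has_integral ((b - a) powr (r + 1) / (r + 1) - (a - a) powr (r + 1) / (r + 1))) {a..b}"
  proof (rule fundamental_theorem_of_calculus_interior_strong[of "{}"])
    show "continuous_on {a..b} (\<lambda>t. (t - a) powr (r + 1) / (r + 1))"
      using assms by (intro continuous_intros continuous_on_powr') auto
    fix t assume t: "t \<in> {a<..<b} - {}"
    have "((\<lambda>t. (t - a) powr (r + 1) / (r + 1)) has_real_derivative
        ((r + 1) * (t - a) powr (r + 1 - of_nat 1) * 1) / (r + 1)) (at t)"
      by (intro DERIV_cdivide DERIV_fun_powr) (use t in \<open>auto intro!: derivative_eq_intros\<close>)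
    then show "((\<lambda>t. (t - a) powr (r + 1) / (r + 1)) has_vector_derivative (t - a) powr r) (at t)"
      using assms by (simp add: has_real_derivative_iff_has_vector_derivative[symmetric])
  qed (use assms in auto)
  then show ?thesis by simp
qed

lemma has_integral_powr_diff_right:
  fixes a b r :: real assumes "a \<le> b" "r \<ge> 0"
  shows "((\<lambda>t. (b - t) powr r) has_integral ((b - a) powr (r + 1) / (r + 1))) {a..b}"
proof -
  have "((\<lambda>t. (b - t) powr r) has_integral (- ((b - b) powr (r + 1)) / (r + 1) - (- ((b - a) powr (r + 1)) / (r + 1)))) {a..b}"
  proof (rule fundamental_theorem_of_calculus_interior_strong[of "{}"])
    show "continuous_on {a..b} (\<lambda>t. - ((b - t) powr (r + 1)) / (r + 1))"
      using assms by (intro continuous_intros continuous_on_powr') auto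
    fix t assume t: "t \<in> {a<..<b} - {}"
    have "((\<lambda>t. - ((b - t) powr (r + 1)) / (r + 1)) has_real_derivative
        - ((r + 1) * (b - t) powr (r + 1 - of_nat 1) * (-1)) / (r + 1)) (at t)"
      by (intro DERIV_cdivide DERIV_minus DERIV_fun_powr) (use t in \<open>auto intro!: derivative_eq_intros\<close>)
    then show "((\<lambda>t. - ((b - t) powr (r + 1)) / (r + 1)) has_vector_derivative (b - t) powr r) (at t)"
      using assms by (simp add: has_real_derivative_iff_has_vector_derivative[symmetric])
  qed (use assms in auto)
  then show ?thesis by simp
qed

lemma has_integral_abs_diff_powr:
  fixes lam p :: real assumes "0 \<le> lam" "lam \<le> 1" "p \<ge> 0"
  shows "((\<lambda>t. \<bar>t - lam\<bar> powr p) has_integral ((lam powr (p + 1) + (1 - lam) powr (p + 1)) / (p + 1))) {0..1}"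
proof -
  have left: "((\<lambda>t. \<bar>t - lam\<bar> powr p) has_integral (lam powr (p + 1) / (p + 1))) {0..lam}"
    by (rule has_integral_eq[OF _ has_integral_powr_diff_right[of 0 lam p, simplified]]) (use assms in auto)
  have right: "((\<lambda>t. \<bar>t - lam\<bar> powr p) has_integral ((1 - lam) powr (p + 1) / (p + 1))) {lam..1}"
    by (rule has_integral_eq[OF _ has_integral_powr_diff_left[of lam 1 p]]) (use assms in auto)
  show ?thesis
    using has_integral_combine[OF _ _ left right] assms by (simp add: add_divide_distrib)
qed

lemma has_integral_pow0:
  fixes \<alpha> :: real assumes "0 \<le> \<alpha>"
  shows "((\<lambda>t. pow0 t \<alpha>) has_integral (1 / (\<alpha> + 1))) {0..1}"
proof -
  have "((\<lambda>t. t powr \<alpha>) has_integral (1 / (\<alpha> + 1))) {0..1}"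
    using has_integral_powr_diff_left[of 0 1 \<alpha>] assms by simp
  then show ?thesis
    by (rule has_integral_spike_finite[of "{0}", rotated 2]) (auto simp: pow0_def)
qed

lemma has_integral_pow0_combination:
  fixes \<alpha> m A B :: real assumes "0 \<le> \<alpha>"
  shows "((\<lambda>t. pow0 t \<alpha> * A + m * (1 - pow0 t \<alpha>) * B) has_integral ((A + \<alpha> * m * B) / (\<alpha> + 1))) {0..1}"
proof -
  have "((\<lambda>t. pow0 t \<alpha> * A + (m * B) * (1 - pow0 t \<alpha>)) has_integral
      (1 / (\<alpha> + 1) * A + (m * B) * (1 - 1 / (\<alpha> + 1)))) {0..1}"
    using has_integral_const_real[of "1::real" 0 1]
    by (intro has_integral_add has_integral_mult_left has_integral_mult_right has_integral_diff
        has_integral_pow0 assms) simp_all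
  moreover have "1 / (\<alpha> + 1) * A + (m * B) * (1 - 1 / (\<alpha> + 1)) = (A + \<alpha> * m * B) / (\<alpha> + 1)"
  proof -
    have "1 - 1 / (\<alpha> + 1) = \<alpha> / (\<alpha> + 1)" using assms by (simp add: field_simps)
    then show ?thesis by (simp add: add_divide_distrib)
  qed
  ultimately show ?thesis by (simp add: algebra_simps)
qed

lemma Beta_1_left:
  fixes y :: real assumes "y > 0"
  shows "Beta 1 y = 1 / y"
proof -
  have "Gamma (y + 1) = y * Gamma y"
    by (rule Gamma_plus1) (use assms in \<open>auto elim!: nonpos_Ints_cases\<close>)
  moreover have "Gamma y > 0" using assms by (rule Gamma_real_pos)
  ultimately show ?thesis unfolding Beta_def by (simp add: add.commute)
qed

lemma has_integral_powr_mult_powr_neg: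
  fixes z p :: real assumes z: "0 \<le> z" "z < 1" and p: "p > 0"
  shows "((\<lambda>t. t powr p * (1 - z * t) powr (- (p + 2))) has_integral
          ((1 / (1 - z)) powr (p + 1) / (p + 1))) {0..1}"
proof -
  define K where "K t = (t / (1 - z * t)) powr (p + 1) / (p + 1)" for t
  have pos: "1 - z * t > 0" if "t \<in> {0..1}" for t
  proof -
    have "z * t \<le> z" using that z by (simp add: mult_left_le)
    then show ?thesis using z by linarith
  qed
  have "((\<lambda>t. t powr p * (1 - z * t) powr (- (p + 2))) has_integral (K 1 - K 0)) {0..1}"
  proof (rule fundamental_theorem_of_calculus_interior_strong[of "{}"])
    have "continuous_on {0..1} (\<lambda>t. t / (1 - z * t))"
      by (intro continuous_intros) (use pos in \<open>metis less_irrefl\<close>)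
    then have "continuous_on {0..1} (\<lambda>t. (t / (1 - z * t)) powr (p + 1))"
      by (rule continuous_on_powr'[OF _ continuous_on_const]) (use pos p in \<open>auto intro!: divide_nonneg_pos\<close>)
    then show "continuous_on {0..1} K"
      unfolding K_def by (rule continuous_on_divide[OF _ continuous_on_const]) (use p in auto)
  next
    fix t :: real assume t: "t \<in> {0<..<1} - {}"
    have pt: "1 - z * t > 0" using pos t by auto
    have "((\<lambda>t. t / (1 - z * t)) has_real_derivative ((1 * (1 - z * t) - t * (- z)) / (1 - z * t)^2)) (at t)"
      using pt by (auto intro!: derivative_eq_intros simp: power2_eq_square)
    then have "((\<lambda>t. t / (1 - z * t)) has_real_derivative (1 / (1 - z * t)^2)) (at t)"
      by (simp add: algebra_simps)
    then have "(K has_real_derivative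
        ((p + 1) * (t / (1 - z * t)) powr (p + 1 - of_nat 1) * (1 / (1 - z * t)^2)) / (p + 1)) (at t)"
      unfolding K_def by (intro DERIV_cdivide DERIV_fun_powr) (use t pt in auto)
    moreover have "((p + 1) * (t / (1 - z * t)) powr (p + 1 - of_nat 1) * (1 / (1 - z * t)^2)) / (p + 1)
        = t powr p * (1 - z * t) powr (- (p + 2))"
    proof -
      have "(1 - z * t) powr (p + 2) = (1 - z * t) powr p * (1 - z * t)^2"
        using pt by (simp add: powr_add powr_numeral)
      then have "(1 - z * t) powr (- (p + 2)) = 1 / ((1 - z * t) powr p * (1 - z * t)^2)"
        using powr_minus[of "1 - z * t" "p + 2"] by (simp add: divide_inverse)
      moreover have "(t / (1 - z * t)) powr (p + 1 - of_nat 1) = t powr p / (1 - z * t) powr p"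
        using t pt by (simp add: powr_divide)
      ultimately show ?thesis using p by simp
    qed
    ultimately show "(K has_vector_derivative t powr p * (1 - z * t) powr (- (p + 2))) (at t)"
      by (simp add: has_real_derivative_iff_has_vector_derivative[symmetric])
  qed (use assms in auto)
  then show ?thesis using p z by (simp add: K_def)
qed

lemma A4_1_eq:
  fixes lam p :: real assumes "0 \<le> lam" "lam \<le> 1" "p > 0"
  shows "A4 1 lam p = (lam powr (p + 1) + (1 - lam) powr (p + 1)) / (p + 1)"
proof -
  have B: "Beta (p + 1) 1 = 1 / (p + 1)"
    using Beta_1_left[of "p + 1"] assms by (simp add: Beta_commute)
  consider "lam = 0" | "0 < lam" "lam < 1" | "lam = 1" using assms by linarith
  then show ?thesis
  proof cases
    case 1 then show ?thesis using assms by (simp add: A4_def)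
  next
    case 3 then show ?thesis using B by (simp add: A4_def)
  next
    case 2
    have "((\<lambda>t. t powr (p + 1 - 1) * (1 - t) powr (p + 2 - (p + 1) - 1) * (1 - (1 - lam) * t) powr (- (1 / 1 + p + 1)))
       has_integral ((1 / (1 - (1 - lam))) powr (p + 1) / (p + 1))) {0..1}"
      by (rule has_integral_spike_finite[of "{1}", OF _ _ has_integral_powr_mult_powr_neg[of "1 - lam" p]])
        (use 2 assms in \<open>auto simp: algebra_simps\<close>)
    then have "hyp2F1 (1 / 1 + p + 1) (p + 1) (p + 2) (1 - lam) = (1 / lam) powr (p + 1)"
      using B assms by (simp add: hyp2F1_def integral_unique)
    then have H: "lam powr (p + 1) * hyp2F1 (1 / 1 + p + 1) (p + 1) (p + 2) (1 - lam) = 1"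
      using 2 by (simp add: powr_mult[symmetric])
    have "A4 1 lam p = lam powr (p + 1) * (Beta 1 (p + 1)
        + (1 - lam) powr (p + 1) / (p + 1) * hyp2F1 (1 / 1 + p + 1) (p + 1) (p + 2) (1 - lam))"
      using 2 by (simp add: A4_def)
    also have "\<dots> = lam powr (p + 1) / (p + 1) + (1 - lam) powr (p + 1) / (p + 1)
        * (lam powr (p + 1) * hyp2F1 (1 / 1 + p + 1) (p + 1) (p + 2) (1 - lam))"
      using Beta_1_left[of "p + 1"] assms by (simp add: distrib_left mult_ac)
    finally show ?thesis unfolding H by (simp add: add_divide_distrib)
  qed
qed

lemma Young_infimum_bound:
  fixes p q P Q X :: real
  assumes pq: "p > 1" "q > 1" "1 / p + 1 / q = 1" and P: "P > 0" and Q: "Q \<ge> 0"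
    and H: "\<And>c. c > 0 \<Longrightarrow> X \<le> c powr p * P / p + c powr (- q) * Q / q"
  shows "X \<le> P powr (1 / p) * Q powr (1 / q)"
proof (cases "Q = 0")
  case True
  show ?thesis
  proof (rule ccontr)
    assume "\<not> ?thesis"
    then have X: "X > 0" using True by simp
    define c where "c = (X * p / (2 * P)) powr (1 / p)"
    have c: "c > 0" using X P pq by (simp add: c_def)
    have "c powr p = X * p / (2 * P)"
      unfolding c_def using X P pq by (simp add: powr_powr)
    then have half: "c powr p * P / p = X / 2" using P pq by (simp add: field_simps)
    have "X \<le> c powr p * P / p" using H[OF c] True by simp
    then have "X \<le> X / 2" by (simp only: half)
    then show False using X by simp
  qed
next
  case False
  then have Qp: "Q > 0" using Q by simp
  define u where "u = P powr (1 / p)"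
  define v where "v = Q powr (1 / q)"
  have u: "u > 0" and v: "v > 0" using P Qp by (auto simp: u_def v_def)
  have Pu: "P = u powr p" unfolding u_def using P pq by (simp add: powr_powr)
  have Qv: "Q = v powr q" unfolding v_def using Qp pq by (simp add: powr_powr)
  \<comment> \<open>The scaling that balances the two terms, turning Young's inequality into equality.\<close>
  define c where "c = u powr (- 1 / q) * v powr (1 / p)"
  have c: "c > 0" using u v by (simp add: c_def)
  have cu: "c * u = (u * v) powr (1 / p)"
  proof -
    have "c * u = u powr (- 1 / q + 1) * v powr (1 / p)"
      by (subst powr_add) (use u in \<open>simp add: c_def\<close>)
    also have "- 1 / q + 1 = 1 / p" using pq by simp
    finally show ?thesis using u v by (simp add: powr_mult)
  qed
  have vc: "v / c = (u * v) powr (1 / q)"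
  proof -
    have "v / c = u powr (1 / q) * (v / v powr (1 / p))"
      unfolding c_def using u v powr_minus[of u "1 / q"] by (simp add: field_simps)
    also have "v / v powr (1 / p) = v powr (1 / q)"
    proof -
      have "1 - 1 / p = 1 / q" using pq by simp
      then show ?thesis using v powr_diff[of v 1 "1 / p"] by simp
    qed
    finally show ?thesis using u v by (simp add: powr_mult)
  qed
  have "c powr p * P = (c * u) powr p" using c u Pu by (simp add: powr_mult)
  also have "\<dots> = u * v" unfolding cu using u v pq by (simp add: powr_powr)
  finally have 1: "c powr p * P = u * v" .
  have "c powr (- q) * Q = (v / c) powr q"
    using c v Qv powr_divide[of v c q] by (simp add: powr_minus divide_inverse)
  also have "\<dots> = u * v" unfolding vc using u v pq by (simp add: powr_powr)
  finally have 2: "c powr (- q) * Q = u * v" .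
  have "X \<le> c powr p * P / p + c powr (- q) * Q / q" by (rule H[OF c])
  also have "\<dots> = u * v * (1 / p + 1 / q)" using 1 2 by (simp add: field_simps)
  finally show ?thesis using pq by (simp add: u_def v_def)
qed

lemma Holder_integral_bound:
  fixes h U V W :: "real \<Rightarrow> real" and S :: "real set"
  assumes pq: "p > 1" "q > 1" "1 / p + 1 / q = 1"
    and h: "h integrable_on S"
    and U: "((\<lambda>t. U t powr p) has_integral P) S" and P: "P > 0"
    and W: "(W has_integral Q) S"
    and hUV: "\<And>t. t \<in> S \<Longrightarrow> \<bar>h t\<bar> \<le> U t * V t"
    and U_nonneg: "\<And>t. t \<in> S \<Longrightarrow> 0 \<le> U t" and V_nonneg: "\<And>t. t \<in> S \<Longrightarrow> 0 \<le> V t"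
    and VW: "\<And>t. t \<in> S \<Longrightarrow> V t powr q \<le> W t"
  shows "\<bar>integral S h\<bar> \<le> P powr (1 / p) * Q powr (1 / q)"
proof (rule Young_infimum_bound[OF pq P])
  show "Q \<ge> 0"
    by (rule has_integral_nonneg[OF W]) (use VW in \<open>force intro: order_trans[OF powr_ge_zero]\<close>)
  fix c :: real assume c: "c > 0"
  have majorant: "((\<lambda>t. c powr p / p * U t powr p + c powr (- q) / q * W t) has_integral
      (c powr p / p * P + c powr (- q) / q * Q)) S"
    by (intro has_integral_add has_integral_mult_right U W)
  have "norm (integral S h) \<le> integral S (\<lambda>t. c powr p / p * U t powr p + c powr (- q) / q * W t)"
  proof (rule integral_norm_bound_integral[OF h has_integral_integrable[OF majorant]])
    fix t assume t: "t \<in> S"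
    have "norm (h t) \<le> (c * U t) * (V t / c)" using hUV[OF t] c by simp
    also have "\<dots> \<le> (c * U t) powr p / p + (V t / c) powr q / q"
      by (rule Youngs_inequality) (use pq c U_nonneg[OF t] V_nonneg[OF t] in auto)
    also have "(c * U t) powr p = c powr p * U t powr p"
      using c U_nonneg[OF t] by (simp add: powr_mult)
    also have "(V t / c) powr q = c powr (- q) * V t powr q"
      using c V_nonneg[OF t] powr_divide[of "V t" c q] by (simp add: powr_minus divide_inverse)
    also have "V t powr q \<le> W t" by (rule VW[OF t])
    finally show "norm (h t) \<le> c powr p / p * U t powr p + c powr (- q) / q * W t"
      using c pq by (simp add: divide_right_mono mult_left_mono)
  qed
  also have "\<dots> = c powr p / p * P + c powr (- q) / q * Q"
    by (rule integral_unique[OF majorant])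
  finally show "\<bar>integral S h\<bar> \<le> c powr p * P / p + c powr (- q) * Q / q" by simp
qed

text \<open>The boundary term left by integrating \<open>(t - lam) f'(t (m x) + m (1 - t) y)\<close> by parts,
  \<open>F\<close> being a primitive of \<open>f\<close>.\<close>
definition segment_defect :: "(real \<Rightarrow> real) \<Rightarrow> (real \<Rightarrow> real) \<Rightarrow> real \<Rightarrow> real \<Rightarrow> real \<Rightarrow> real \<Rightarrow> real" where
  "segment_defect f F m lam x y =
     (x - y) * ((1 - lam) * f (m * x) + lam * f (m * y)) - (F (m * x) - F (m * y)) / m"

lemma has_integral_segment_defect:
  fixes f f' F :: "real \<Rightarrow> real" and S :: "real set" and m x y lam :: real
  assumes seg: "\<And>t. t \<in> {0..1} \<Longrightarrow> t * (m * x) + m * (1 - t) * y \<in> S"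
    and F_deriv: "\<And>z. z \<in> S \<Longrightarrow> (F has_real_derivative f z) (at z within S)"
    and f_deriv: "\<And>z. z \<in> S \<Longrightarrow> (f has_real_derivative f' z) (at z)"
    and m: "m \<noteq> 0"
  shows "((\<lambda>t. m * (x - y)^2 * ((t - lam) * f' (t * (m * x) + m * (1 - t) * y)))
           has_integral segment_defect f F m lam x y) {0..1}"
proof -
  define \<phi> where "\<phi> t = t * (m * x) + m * (1 - t) * y" for t
  define G where "G t = (x - y) * (t - lam) * f (\<phi> t) - F (\<phi> t) / m" for t
  have \<phi>_deriv: "(\<phi> has_real_derivative (m * (x - y))) (at t within T)" for t T
    unfolding \<phi>_def by (auto intro!: derivative_eq_intros simp: algebra_simps)
  have "(G has_real_derivative m * (x - y)^2 * ((t - lam) * f' (\<phi> t))) (at t within {0..1})"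
    if t: "t \<in> {0..1}" for t
  proof -
    have \<phi>t: "\<phi> t \<in> S" using seg t unfolding \<phi>_def by blast
    have "(F has_real_derivative f (\<phi> t)) (at (\<phi> t) within \<phi> ` {0..1})"
      by (rule DERIV_subset[OF F_deriv[OF \<phi>t]]) (use seg in \<open>auto simp: \<phi>_def\<close>)
    then have F\<phi>: "((\<lambda>t. F (\<phi> t)) has_real_derivative f (\<phi> t) * (m * (x - y))) (at t within {0..1})"
      using DERIV_image_chain[OF _ \<phi>_deriv] by (simp add: o_def)
    have f\<phi>: "((\<lambda>t. f (\<phi> t)) has_real_derivative f' (\<phi> t) * (m * (x - y))) (at t within {0..1})"
      by (rule DERIV_chain2[OF f_deriv[OF \<phi>t] \<phi>_deriv])
    have weighted_f\<phi>: "((\<lambda>z. (z - lam) * f (\<phi> z)) has_real_derivative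
        (t - lam) * (f' (\<phi> t) * (m * (x - y))) + 1 * f (\<phi> t)) (at t within {0..1})"
      by (rule DERIV_mult'[OF _ f\<phi>]) (auto intro!: derivative_eq_intros)
    have "(G has_real_derivative (x - y) * ((t - lam) * (f' (\<phi> t) * (m * (x - y))) + 1 * f (\<phi> t))
        - f (\<phi> t) * (m * (x - y)) / m) (at t within {0..1})"
      unfolding G_def mult.assoc by (intro DERIV_diff DERIV_cmult DERIV_cdivide weighted_f\<phi> F\<phi>)
    moreover have "(x - y) * ((t - lam) * (f' (\<phi> t) * (m * (x - y))) + 1 * f (\<phi> t))
        - f (\<phi> t) * (m * (x - y)) / m = m * (x - y)^2 * ((t - lam) * f' (\<phi> t))"
      using m by (simp add: field_simps power2_eq_square)
    ultimately show ?thesis by simp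
  qed
  then have "((\<lambda>t. m * (x - y)^2 * ((t - lam) * f' (\<phi> t))) has_integral (G 1 - G 0)) {0..1}"
    by (intro fundamental_theorem_of_calculus)
      (auto simp: has_real_derivative_iff_has_vector_derivative[symmetric])
  moreover have "G 1 - G 0 = segment_defect f F m lam x y"
    unfolding G_def \<phi>_def segment_defect_def by (simp add: algebra_simps diff_divide_distrib)
  ultimately show ?thesis by (simp add: \<phi>_def)
qed

lemma abs_segment_defect_le:
  fixes f f' F :: "real \<Rightarrow> real" and S :: "real set" and m x y lam \<alpha> A B p q :: real
  assumes seg: "\<And>t. t \<in> {0..1} \<Longrightarrow> t * (m * x) + m * (1 - t) * y \<in> S"
    and F_deriv: "\<And>z. z \<in> S \<Longrightarrow> (F has_real_derivative f z) (at z within S)"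
    and f_deriv: "\<And>z. z \<in> S \<Longrightarrow> (f has_real_derivative f' z) (at z)"
    and f'_bound: "\<And>t. t \<in> {0..1} \<Longrightarrow>
          \<bar>f' (t * (m * x) + m * (1 - t) * y)\<bar> powr q \<le> pow0 t \<alpha> * A + m * (1 - pow0 t \<alpha>) * B"
    and m: "m > 0" and \<alpha>: "\<alpha> \<ge> 0"
    and pq: "p > 1" "q > 1" "1 / p + 1 / q = 1"
    and lam: "0 \<le> lam" "lam \<le> 1"
  shows "\<bar>segment_defect f F m lam x y\<bar>
     \<le> m * (x - y)^2 * ((lam powr (p + 1) + (1 - lam) powr (p + 1)) / (p + 1)) powr (1 / p)
         * ((A + \<alpha> * m * B) / (\<alpha> + 1)) powr (1 / q)"
proof (cases "x = y")
  case True
  then show ?thesis by (simp add: segment_defect_def)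
next
  case False
  define P where "P = (lam powr (p + 1) + (1 - lam) powr (p + 1)) / (p + 1)"
  define h where "h t = (t - lam) * f' (t * (m * x) + m * (1 - t) * y)" for t
  have scale: "m * (x - y)^2 > 0" using m False by simp
  have "(h has_integral segment_defect f F m lam x y / (m * (x - y)^2)) {0..1}"
    using has_integral_cmul[OF has_integral_segment_defect[OF seg F_deriv f_deriv], of "1 / (m * (x - y)^2)" lam]
      scale False m unfolding h_def by simp
  then have defect: "segment_defect f F m lam x y = m * (x - y)^2 * integral {0..1} h"
    and h_int: "h integrable_on {0..1}"
    using scale by (auto simp: integral_unique)
  have "P > 0"
  proof -
    have "lam powr (p + 1) > 0 \<or> (1 - lam) powr (p + 1) > 0" using lam by auto
    then have "lam powr (p + 1) + (1 - lam) powr (p + 1) > 0"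
      using powr_ge_zero[of lam "p + 1"] powr_ge_zero[of "1 - lam" "p + 1"] by linarith
    then show ?thesis unfolding P_def using pq by simp
  qed
  have "\<bar>integral {0..1} h\<bar> \<le> P powr (1 / p) * ((A + \<alpha> * m * B) / (\<alpha> + 1)) powr (1 / q)"
  proof (rule Holder_integral_bound[OF pq h_int _ \<open>P > 0\<close> has_integral_pow0_combination[OF \<alpha>]])
    show "((\<lambda>t. \<bar>t - lam\<bar> powr p) has_integral P) {0..1}"
      unfolding P_def by (rule has_integral_abs_diff_powr) (use lam pq in auto)
  qed (auto simp: h_def abs_mult f'_bound)
  then show ?thesis
    unfolding defect P_def using scale m by (simp add: abs_mult mult_left_mono mult.assoc)
qed

lemma Ostrowski_difference_eq_segment_defects:
  fixes f F :: "real \<Rightarrow> real" and a b m lam x :: real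
  assumes "a < b" "m \<noteq> 0"
  shows "(1 - lam) * f (m * x) + lam * (((x - a) * f (m * a) + (b - x) * f (m * b)) / (b - a))
           - (1 / (m * (b - a))) * (F (m * b) - F (m * a))
         = (segment_defect f F m lam x a - segment_defect f F m lam x b) / (b - a)"
proof -
  have "segment_defect f F m lam x a - segment_defect f F m lam x b
      = (b - a) * ((1 - lam) * f (m * x)) + lam * ((x - a) * f (m * a) + (b - x) * f (m * b))
        - (F (m * b) - F (m * a)) / m"
    by (simp add: segment_defect_def algebra_simps diff_divide_distrib)
  then show ?thesis
    using assms by (simp add: add_divide_distrib diff_divide_distrib distrib_left)
qed

lemma abs_Ostrowski_difference_le:
  fixes f F :: "real \<Rightarrow> real" and a b m lam x C Ka Kb :: real
  assumes ab: "a < b" and m: "m > 0"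
    and defect_a: "\<bar>segment_defect f F m lam x a\<bar> \<le> m * (x - a)^2 * C * Ka"
    and defect_b: "\<bar>segment_defect f F m lam x b\<bar> \<le> m * (x - b)^2 * C * Kb"
  shows "\<bar>(1 - lam) * f (m * x) + lam * (((x - a) * f (m * a) + (b - x) * f (m * b)) / (b - a))
           - (1 / (m * (b - a))) * (F (m * b) - F (m * a))\<bar>
         \<le> (m * C / (b - a)) * ((x - a)^2 * Ka + (b - x)^2 * Kb)"
proof -
  have "\<bar>segment_defect f F m lam x a - segment_defect f F m lam x b\<bar>
      \<le> m * (x - a)^2 * C * Ka + m * (x - b)^2 * C * Kb"
    using abs_triangle_ineq4 defect_a defect_b by (rule order_trans[OF _ add_mono])
  also have "\<dots> = (m * C / (b - a)) * ((x - a)^2 * Ka + (b - x)^2 * Kb) * (b - a)"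
    using ab by (simp add: field_simps power2_commute)
  finally have "\<bar>segment_defect f F m lam x a - segment_defect f F m lam x b\<bar>
      \<le> (m * C / (b - a)) * ((x - a)^2 * Ka + (b - x)^2 * Kb) * (b - a)" .
  moreover have "m \<noteq> 0" using m by simp
  ultimately show ?thesis
    using Ostrowski_difference_eq_segment_defects[where f = f and F = F and lam = lam and x = x, OF ab]
      ab by (simp add: abs_divide pos_divide_le_eq)
qed

lemma scaled_convex_combination_mem:
  fixes a b m t x y :: real
  assumes "t \<in> {0..1}" "x \<in> {a..b}" "y \<in> {a..b}" "m \<ge> 0"
  shows "t * (m * x) + m * (1 - t) * y \<in> {m * a..m * b}"
proof -
  have "t * a \<le> t * x" "t * x \<le> t * b" "(1 - t) * a \<le> (1 - t) * y" "(1 - t) * y \<le> (1 - t) * b"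
    using assms by (auto intro: mult_left_mono)
  then have "a \<le> t * x + (1 - t) * y" "t * x + (1 - t) * y \<le> b"
    by (simp_all add: algebra_simps)
  then have "m * a \<le> m * (t * x + (1 - t) * y)" "m * (t * x + (1 - t) * y) \<le> m * b"
    using assms(4) by (auto intro: mult_left_mono)
  then show ?thesis by (simp add: algebra_simps)
qed

lemma abs_segment_defect_le_A4:
  fixes f f' F :: "real \<Rightarrow> real" and m \<alpha> a b x y lam p q :: real
  assumes conv: "alpha_m_convex_on \<alpha> m {m * a..b} (\<lambda>z. \<bar>f' z\<bar> powr q)"
    and F_deriv: "\<And>z. z \<in> {m * a..m * b} \<Longrightarrow> (F has_real_derivative f z) (at z within {m * a..m * b})"
    and f_deriv: "\<And>z. z \<in> {m * a..m * b} \<Longrightarrow> (f has_real_derivative f' z) (at z)"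
    and m: "0 < m" "m \<le> 1" and \<alpha>: "0 \<le> \<alpha>" and a: "0 \<le> a"
    and pq: "p > 1" "q > 1" "1 / p + 1 / q = 1"
    and lam: "lam \<in> {0..1}" and x: "x \<in> {a..b}" and y: "y \<in> {a..b}"
  shows "\<bar>segment_defect f F m lam x y\<bar> \<le> m * (x - y)^2 * A4 1 lam p powr (1 / p)
           * ((\<bar>f' (m * x)\<bar> powr q + \<alpha> * m * \<bar>f' y\<bar> powr q) / (\<alpha> + 1)) powr (1 / q)"
proof -
  have lam01: "0 \<le> lam" "lam \<le> 1" using lam by auto
  have ma_le: "m * a \<le> a" and mb_le: "m * b \<le> b"
    using m a x by (auto intro: mult_left_le_one_le)
  show ?thesis
    unfolding A4_1_eq[OF lam01 order.strict_trans[OF zero_less_one pq(1)]]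
  proof (rule abs_segment_defect_le[OF _ F_deriv f_deriv _ m(1) \<alpha> pq lam01])
    fix t :: real assume t: "t \<in> {0..1}"
    show seg: "t * (m * x) + m * (1 - t) * y \<in> {m * a..m * b}"
      by (rule scaled_convex_combination_mem) (use t x y m in auto)
    have "m * x \<in> {m * a..m * b}" using x m by simp
    then have "m * x \<in> {m * a..b}" "y \<in> {m * a..b}" "t * (m * x) + m * (1 - t) * y \<in> {m * a..b}"
      using y ma_le mb_le seg by auto
    then show "\<bar>f' (t * (m * x) + m * (1 - t) * y)\<bar> powr q
        \<le> pow0 t \<alpha> * \<bar>f' (m * x)\<bar> powr q + m * (1 - pow0 t \<alpha>) * \<bar>f' y\<bar> powr q"
      using conv t unfolding alpha_m_convex_on_def by blast
  qed auto
qed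

theorem mainTheorem10:
  fixes f :: "real \<Rightarrow> real" and I :: "real set"
    and m \<alpha> a b q p x lam :: real
  assumes I_interval: "is_interval I" and I_nonneg: "I \<subseteq> {0..}"
    and f_diff: "\<forall>y\<in>interior I. f differentiable (at y)"
    and m: "0 < m" "m \<le> 1"
    and \<alpha>: "0 \<le> \<alpha>" "\<alpha> \<le> 1"
    and ab: "a < b"
    and ma_int: "m * a \<in> interior I" and b_int: "b \<in> interior I"
    and f'_int: "deriv f absolutely_integrable_on {m * a..m * b}"
    and conv: "alpha_m_convex_on \<alpha> m {m * a..b} (\<lambda>y. \<bar>deriv f y\<bar> powr q)"
    and q: "q > 1" and p: "p = q / (q - 1)"
    and x: "x \<in> {a..b}" and lam: "lam \<in> {0..1}"
  shows "\<bar>(1 - lam) * f (m * x) + lam * (((x - a) * f (m * a) + (b - x) * f (m * b)) / (b - a))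
            - (1 / (m * (b - a))) * integral {m * a..m * b} f\<bar>
         \<le> (m * A4 1 lam p powr (1 / p) / (b - a)) *
            ((x - a)^2 * ((\<bar>deriv f (m * x)\<bar> powr q + \<alpha> * m * \<bar>deriv f a\<bar> powr q) / (\<alpha> + 1)) powr (1 / q)
           + (b - x)^2 * ((\<bar>deriv f (m * x)\<bar> powr q + \<alpha> * m * \<bar>deriv f b\<bar> powr q) / (\<alpha> + 1)) powr (1 / q))"
proof -
  have pq: "p > 1" "q > 1" "1 / p + 1 / q = 1" using q unfolding p by (auto simp: field_simps)
  have "0 \<le> m * a" using ma_int interior_subset I_nonneg by fastforce
  then have a: "0 \<le> a" using m by (simp add: zero_le_mult_iff)
  have "{m * a..b} \<subseteq> interior I"
    using I_interval mem_is_interval_1_I[OF _ ma_int b_int]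
    by (auto simp: is_interval_convex_1 convex_interior)
  moreover have "m * b \<le> b" using m a ab by (auto intro: mult_left_le_one_le)
  ultimately have f_deriv: "(f has_real_derivative deriv f z) (at z)" if "z \<in> {m * a..m * b}" for z
    using that f_diff DERIV_deriv_iff_real_differentiable by force
  define F where "F z = integral {m * a..z} f" for z
  have "continuous_on {m * a..m * b} f"
    using f_deriv by (meson DERIV_continuous continuous_at_imp_continuous_on)
  then have F_deriv: "(F has_real_derivative f z) (at z within {m * a..m * b})"
    if "z \<in> {m * a..m * b}" for z
    unfolding F_def using that by (intro integral_has_real_derivative) auto
  have "\<bar>(1 - lam) * f (m * x) + lam * (((x - a) * f (m * a) + (b - x) * f (m * b)) / (b - a))
      - (1 / (m * (b - a))) * (F (m * b) - F (m * a))\<bar>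
    \<le> (m * A4 1 lam p powr (1 / p) / (b - a)) *
      ((x - a)^2 * ((\<bar>deriv f (m * x)\<bar> powr q + \<alpha> * m * \<bar>deriv f a\<bar> powr q) / (\<alpha> + 1)) powr (1 / q)
     + (b - x)^2 * ((\<bar>deriv f (m * x)\<bar> powr q + \<alpha> * m * \<bar>deriv f b\<bar> powr q) / (\<alpha> + 1)) powr (1 / q))"
    by (rule abs_Ostrowski_difference_le[OF ab m(1)
          abs_segment_defect_le_A4[OF conv F_deriv f_deriv m \<alpha>(1) a pq lam x]
          abs_segment_defect_le_A4[OF conv F_deriv f_deriv m \<alpha>(1) a pq lam x]])
      (use ab in auto)
  then show ?thesis by (simp add: F_def)
qed

end
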